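(* There is a closed subset $B$ of $2^\omega$ such that $\lambda(B)>1/2$ and for each $x\in B$ we have $flip_n(x)\notin B$ for infinitely many $n\in\omega$.
   Context: $\lambda$ is the standard product (Haar/coin-tossing) measure on $2^\omega$. For $n\in\omega$, $flip_n\colon2^\omega\to2^\omega$ is given by $flip_n(x)=x+\chi_{\{n\}}$ (addition coordinatewise mod 2), i.e. it changes the $n$-th coordinate of $x$. *)

theory Defs
  imports "HOL-Probability.Probability"
begin

definition cantor_measure :: "(nat \<Rightarrow> bool) measure" where
  "cantor_measure = PiM UNIV (\<lambda>_. measure_pmf (pmf_of_set (UNIV :: bool set)))"

definition cantor_topology :: "(nat \<Rightarrow> bool) topology" where
  "cantor_topology = product_topology (\<lambda>_. discrete_topology (UNIV :: bool set)) UNIV"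

definition flip :: "nat \<Rightarrow> (nat \<Rightarrow> bool) \<Rightarrow> (nat \<Rightarrow> bool)" where
  "flip n x = x(n := \<not> x n)"

end

theory Submission
  imports Defs
begin

(* Cut the index set into the dyadic blocks [2^m, 2^(m+1)), m \<ge> 3. On the block of level m,
   the syndrome of x is the XOR of the low m bits of all positions n of the block with x n.
   Flipping a position p of the block changes the syndrome by the low m bits of p, and these
   run through every m-bit word exactly once as p ranges over the block. As flips preserve
   the measure, all 2^m syndrome classes have measure 2^-m, and every x is a single flip away
   from the zero class of every block. The complement B of the union of the zero classes is
   closed (each class depends on finitely many coordinates), has measure at least
   1 - (2^-3 + 2^-4 + ...) = 3/4, and each x in B leaves B by a flip inside every block. *)

abbreviation coin :: "bool measure" where
  "coin \<equiv> measure_pmf (pmf_of_set UNIV)"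

interpretation coin_tossing: product_prob_space "\<lambda>_::nat. coin" UNIV
  by unfold_locales

lemma space_cantor_measure [simp]: "space cantor_measure = UNIV"
  by (simp add: cantor_measure_def space_PiM)

lemma prob_space_cantor_measure: "prob_space cantor_measure"
  unfolding cantor_measure_def by (rule coin_tossing.P.prob_space_axioms)

interpretation cantor: prob_space cantor_measure
  by (rule prob_space_cantor_measure)

lemma cylinder_eq_prod_emb:
  "{x. \<forall>i\<in>J. x i \<in> F i} = prod_emb UNIV (\<lambda>_. coin) J (PiE J F)"
  by (auto simp: prod_emb_def PiE_iff)

lemma cylinder_in_sets_cantor_measure:
  "finite J \<Longrightarrow> {x. \<forall>i\<in>J. x i \<in> F i} \<in> sets cantor_measure"
  unfolding cylinder_eq_prod_emb cantor_measure_def by (intro sets_PiM_I) auto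

lemma closedin_cantor_cylinder: "closedin cantor_topology {x. \<forall>i\<in>J. x i = y i}"
proof -
  have "{x. \<forall>i\<in>J. x i = y i} = PiE UNIV (\<lambda>i. if i \<in> J then {y i} else UNIV)"
    by (auto simp: PiE_iff split: if_splits)
  then show ?thesis
    by (simp add: cantor_topology_def closedin_product_topology)
qed

definition determined_by :: "nat set \<Rightarrow> (nat \<Rightarrow> bool) set \<Rightarrow> bool" where
  "determined_by J S \<longleftrightarrow> (\<forall>x y. (\<forall>i\<in>J. x i = y i) \<longrightarrow> (x \<in> S \<longleftrightarrow> y \<in> S))"

lemma determined_by_Compl: "determined_by J S \<Longrightarrow> determined_by J (- S)"
  unfolding determined_by_def by auto

lemma determined_by_eq_UN_cylinders:
  "determined_by J S \<Longrightarrow> S = (\<Union>y\<in>(\<lambda>x. restrict x J) ` S. {x. \<forall>i\<in>J. x i = y i})"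
  unfolding determined_by_def by auto

lemma finite_image_restrict: "finite J \<Longrightarrow> finite ((\<lambda>x. restrict x J) ` (S :: (nat \<Rightarrow> bool) set))"
  by (rule finite_subset[OF _ finite_PiE[of J "\<lambda>_. UNIV :: bool set"]]) auto

lemma determined_by_imp_sets_cantor_measure:
  assumes "finite J" "determined_by J S"
  shows "S \<in> sets cantor_measure"
proof (subst determined_by_eq_UN_cylinders[OF assms(2)], rule sets.finite_UN)
  show "{x. \<forall>i\<in>J. x i = y i} \<in> sets cantor_measure" for y
    using cylinder_in_sets_cantor_measure[OF assms(1), of "\<lambda>i. {y i}"] by simp
qed (rule finite_image_restrict[OF assms(1)])

lemma determined_by_imp_closedin_cantor:
  assumes "finite J" "determined_by J S"
  shows "closedin cantor_topology S"
  by (subst determined_by_eq_UN_cylinders[OF assms(2)])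
     (rule closedin_Union[OF finite_imageI[OF finite_image_restrict[OF assms(1)]]],
      auto intro: closedin_cantor_cylinder)

lemma emeasure_coin_vimage_Not: "emeasure coin (Not -` A) = emeasure coin A"
proof -
  have "card (Not -` A) = card A"
    by (rule card_vimage_inj) (auto simp: inj_def)
  then show ?thesis
    by (simp add: measure_pmf.emeasure_eq_measure measure_pmf_of_set)
qed

lemma measurable_flip: "flip p \<in> cantor_measure \<rightarrow>\<^sub>M cantor_measure"
  unfolding cantor_measure_def
proof (rule measurable_PiM_single')
  fix i
  have "(\<lambda>x. flip p x i) = (if i = p then Not else id) \<circ> (\<lambda>x. x i)"
    by (auto simp: flip_def)
  moreover have "(\<lambda>x. x i) \<in> Pi\<^sub>M UNIV (\<lambda>_. coin) \<rightarrow>\<^sub>M coin"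
    by (rule measurable_component_singleton) simp
  ultimately show "(\<lambda>x. flip p x i) \<in> Pi\<^sub>M UNIV (\<lambda>_. coin) \<rightarrow>\<^sub>M coin"
    by (simp add: measurable_comp measurable_def)
qed (simp add: space_PiM)

lemma vimage_flip_cylinder:
  "flip p -` {x. \<forall>i\<in>J. x i \<in> F i} = {x. \<forall>i\<in>J. x i \<in> (if i = p then Not -` F i else F i)}"
  by (auto simp: flip_def)

lemma distr_flip_cantor_measure: "distr cantor_measure cantor_measure (flip p) = cantor_measure"
  unfolding cantor_measure_def
proof (rule coin_tossing.PiM_eq)
  fix J :: "nat set" and F assume J: "finite J" and F: "\<And>j. j \<in> J \<Longrightarrow> F j \<in> sets coin"
  let ?G = "\<lambda>i. if i = p then Not -` F i else F i"
  have "emeasure (distr (Pi\<^sub>M UNIV (\<lambda>_. coin)) (Pi\<^sub>M UNIV (\<lambda>_. coin)) (flip p))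
          (prod_emb UNIV (\<lambda>_. coin) J (PiE J F))
      = emeasure cantor_measure (flip p -` {x. \<forall>i\<in>J. x i \<in> F i})"
    using measurable_flip cylinder_in_sets_cantor_measure[OF J, of F]
    by (simp add: emeasure_distr cantor_measure_def cylinder_eq_prod_emb space_PiM)
  also have "\<dots> = emeasure cantor_measure {x. \<forall>i\<in>J. x i \<in> ?G i}"
    by (simp only: vimage_flip_cylinder)
  also have "\<dots> = (\<Prod>i\<in>J. emeasure coin (?G i))"
    unfolding cylinder_eq_prod_emb cantor_measure_def
    using J by (intro coin_tossing.emeasure_PiM_emb) simp_all
  also have "\<dots> = (\<Prod>i\<in>J. emeasure coin (F i))"
    by (rule prod.cong[OF refl]) (metis emeasure_coin_vimage_Not)
  finally show "emeasure (distr (Pi\<^sub>M UNIV (\<lambda>_. coin)) (Pi\<^sub>M UNIV (\<lambda>_. coin)) (flip p))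
      (prod_emb UNIV (\<lambda>_. coin) J (PiE J F)) = (\<Prod>i\<in>J. emeasure coin (F i))" .
qed simp

lemma measure_vimage_flip:
  assumes "A \<in> sets cantor_measure"
  shows "measure cantor_measure (flip p -` A) = measure cantor_measure A"
  using measure_distr[OF measurable_flip assms, of p] by (simp add: distr_flip_cantor_measure)

definition dyadic_block :: "nat \<Rightarrow> nat set" where
  "dyadic_block m = {2^m..<2^Suc m}"

lemma finite_dyadic_block [simp]: "finite (dyadic_block m)"
  by (simp add: dyadic_block_def)

lemma card_dyadic_block: "card (dyadic_block m) = 2^m"
  by (simp add: dyadic_block_def)

lemma less_if_mem_dyadic_block: "p \<in> dyadic_block m \<Longrightarrow> m < p"
  unfolding dyadic_block_def by (meson atLeastLessThan_iff less_exp less_le_trans)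

lemma mem_dyadic_block_iff: "p \<in> dyadic_block m \<longleftrightarrow> p = 2^m + take_bit m p"
proof
  assume "p \<in> dyadic_block m"
  then have "p div 2^m = 1"
    by (simp add: dyadic_block_def div_nat_eqI)
  then show "p = 2^m + take_bit m p"
    using div_mult_mod_eq[of p "2^m"] by (simp add: take_bit_eq_mod)
next
  assume "p = 2^m + take_bit m p"
  then show "p \<in> dyadic_block m"
    using take_bit_nat_less_exp[of m p] unfolding dyadic_block_def by (simp, linarith)
qed

lemma ex_mem_dyadic_block_low_bits: "\<exists>p\<in>dyadic_block m. \<forall>j<m. bit p j = P j"
proof -
  define r :: nat where "r = horner_sum of_bool 2 (map P [0..<m])"
  have "r < 2^m"
    using horner_sum_of_bool_2_less[of "map P [0..<m]"] by (simp add: r_def)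
  then have low_bits: "take_bit m (2^m + r) = r"
    by (simp add: take_bit_eq_mod)
  then have "2^m + r \<in> dyadic_block m"
    unfolding mem_dyadic_block_iff by simp
  moreover have "bit (2^m + r) j = P j" if "j < m" for j
  proof -
    have "bit (2^m + r) j = bit (take_bit m (2^m + r)) j"
      using that by (simp add: bit_take_bit_iff)
    also have "\<dots> = P j"
      unfolding low_bits using that by (simp add: r_def bit_horner_sum_bit_iff)
    finally show ?thesis .
  qed
  ultimately show ?thesis
    by blast
qed

lemma dyadic_block_low_bits_inject:
  assumes "p \<in> dyadic_block m" "q \<in> dyadic_block m" "\<forall>j<m. bit p j = bit q j"
  shows "p = q"
proof -
  have "take_bit m p = take_bit m q"
    using assms(3) by (auto simp: bit_eq_iff bit_take_bit_iff)
  then show ?thesis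
    using assms(1,2) unfolding mem_dyadic_block_iff by simp
qed

lemma odd_card_flip:
  assumes "finite A" "p \<in> A"
  shows "odd (card {n \<in> A. flip p x n \<and> P n}) \<longleftrightarrow> odd (card {n \<in> A. x n \<and> P n}) \<noteq> P p"
proof -
  let ?S = "{n \<in> A. x n \<and> P n}" and ?T = "{n \<in> A. flip p x n \<and> P n}"
  have fin: "finite ?S" "finite ?T"
    using assms(1) by simp_all
  consider "\<not> P p" | "P p" "x p" | "P p" "\<not> x p"
    by blast
  then show ?thesis
  proof cases
    case 1
    then have "?T = ?S"
      by (auto simp: flip_def)
    then show ?thesis
      using 1 by simp
  next
    case 2
    then have "?S = insert p ?T" "p \<notin> ?T"
      using assms(2) by (auto simp: flip_def)
    then show ?thesis
      using 2 fin(2) by simp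
  next
    case 3
    then have "?T = insert p ?S" "p \<notin> ?S"
      using assms(2) by (auto simp: flip_def)
    then show ?thesis
      using 3 fin(1) by simp
  qed
qed

definition parity_check :: "nat \<Rightarrow> (nat \<Rightarrow> bool) \<Rightarrow> nat \<Rightarrow> bool" where
  "parity_check m x j \<longleftrightarrow> odd (card {n \<in> dyadic_block m. x n \<and> bit n j})"

definition syndrome_class :: "nat \<Rightarrow> nat \<Rightarrow> (nat \<Rightarrow> bool) set" where
  "syndrome_class m r = {x. \<forall>j<m. parity_check m x j = bit r j}"

lemma parity_check_flip:
  "p \<in> dyadic_block m \<Longrightarrow> parity_check m (flip p x) j \<longleftrightarrow> parity_check m x j \<noteq> bit p j"
  unfolding parity_check_def by (rule odd_card_flip) simp_all

lemma vimage_flip_syndrome_class_0: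
  "p \<in> dyadic_block m \<Longrightarrow> flip p -` syndrome_class m 0 = syndrome_class m p"
  by (auto simp: syndrome_class_def parity_check_flip)

lemma UN_syndrome_class: "(\<Union>p\<in>dyadic_block m. syndrome_class m p) = UNIV"
proof -
  have "x \<in> (\<Union>p\<in>dyadic_block m. syndrome_class m p)" for x
    using ex_mem_dyadic_block_low_bits[of m "parity_check m x"]
    by (auto simp: syndrome_class_def)
  then show ?thesis
    by blast
qed

lemma disjoint_family_on_syndrome_class:
  "disjoint_family_on (syndrome_class m) (dyadic_block m)"
  unfolding disjoint_family_on_def
proof (intro ballI impI)
  fix p q assume "p \<in> dyadic_block m" "q \<in> dyadic_block m" "p \<noteq> q"
  then show "syndrome_class m p \<inter> syndrome_class m q = {}"
    using dyadic_block_low_bits_inject[of p m q] by (auto simp: syndrome_class_def)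
qed

lemma parity_check_cong:
  assumes "\<forall>i\<in>dyadic_block m. x i = y i"
  shows "parity_check m x = parity_check m y"
proof
  fix j
  have "{n \<in> dyadic_block m. x n \<and> bit n j} = {n \<in> dyadic_block m. y n \<and> bit n j}"
    using assms by auto
  then show "parity_check m x j = parity_check m y j"
    by (simp add: parity_check_def)
qed

lemma determined_by_syndrome_class:
  "determined_by (dyadic_block m) (syndrome_class m r)"
  unfolding determined_by_def
proof (intro allI impI)
  fix x y :: "nat \<Rightarrow> bool"
  assume "\<forall>i\<in>dyadic_block m. x i = y i"
  then have "parity_check m x = parity_check m y"
    by (rule parity_check_cong)
  then show "x \<in> syndrome_class m r \<longleftrightarrow> y \<in> syndrome_class m r"
    by (simp add: syndrome_class_def)
qed

lemma syndrome_class_in_sets: "syndrome_class m r \<in> sets cantor_measure"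
  by (rule determined_by_imp_sets_cantor_measure[OF finite_dyadic_block determined_by_syndrome_class])

lemma measure_syndrome_class_0: "measure cantor_measure (syndrome_class m 0) = 1 / 2^m"
proof -
  have "1 = measure cantor_measure (\<Union>p\<in>dyadic_block m. syndrome_class m p)"
    using cantor.prob_space by (simp add: UN_syndrome_class)
  also have "\<dots> = (\<Sum>p\<in>dyadic_block m. measure cantor_measure (syndrome_class m p))"
    by (intro measure_finite_Union disjoint_family_on_syndrome_class)
       (auto simp: syndrome_class_in_sets cantor.emeasure_eq_measure)
  also have "\<dots> = (\<Sum>p\<in>dyadic_block m. measure cantor_measure (syndrome_class m 0))"
  proof (rule sum.cong[OF refl])
    fix p assume "p \<in> dyadic_block m"
    then show "measure cantor_measure (syndrome_class m p) = measure cantor_measure (syndrome_class m 0)"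
      using measure_vimage_flip[OF syndrome_class_in_sets, of p m 0] vimage_flip_syndrome_class_0
      by simp
  qed
  also have "\<dots> = 2^m * measure cantor_measure (syndrome_class m 0)"
    by (simp add: card_dyadic_block)
  finally show ?thesis
    by (simp add: field_simps)
qed

lemma ex_flip_into_syndrome_class_0:
  "\<exists>p\<in>dyadic_block m. flip p x \<in> syndrome_class m 0"
proof -
  obtain p where "p \<in> dyadic_block m" "x \<in> syndrome_class m p"
    using UN_syndrome_class[of m] by blast
  then show ?thesis
    using vimage_flip_syndrome_class_0 by blast
qed

lemma measure_UN_syndrome_class_0_le:
  "measure cantor_measure (\<Union>k. syndrome_class (k + a) 0) \<le> 2 / 2^a"
proof -
  have geometric: "(\<lambda>k. measure cantor_measure (syndrome_class (k + a) 0)) sums (2 / 2^a)"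
    using sums_mult[OF geometric_sums[of "1/2 :: real"], of "1 / 2^a"]
    by (simp add: measure_syndrome_class_0 power_add power_one_over mult.commute)
  show ?thesis
    using cantor.finite_measure_subadditive_countably[of "\<lambda>k. syndrome_class (k + a) 0"]
      geometric syndrome_class_in_sets
    by (auto simp: sums_iff)
qed

lemma infinite_flips_into_UN_syndrome_class_0:
  "infinite {n. flip n x \<in> (\<Union>k. syndrome_class (k + a) 0)}"
  unfolding infinite_nat_iff_unbounded_le
proof
  fix k
  obtain p where "p \<in> dyadic_block (k + a)" "flip p x \<in> syndrome_class (k + a) 0"
    using ex_flip_into_syndrome_class_0 by blast
  moreover from this(1) have "k \<le> p"
    using less_if_mem_dyadic_block by force
  ultimately show "\<exists>n\<ge>k. n \<in> {n. flip n x \<in> (\<Union>k. syndrome_class (k + a) 0)}"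
    by blast
qed

theorem proposition6p2:
  shows "\<exists>B. closedin cantor_topology B \<and> B \<in> sets cantor_measure \<and>
             measure cantor_measure B > 1/2 \<and>
             (\<forall>x\<in>B. infinite {n. flip n x \<notin> B})"
proof -
  define U where "U = (\<Union>k. syndrome_class (k + 3) 0)"
  have U: "U \<in> sets cantor_measure"
    unfolding U_def by (intro sets.countable_UN') (auto simp: syndrome_class_in_sets)
  have "closedin cantor_topology (- U)"
    unfolding U_def Compl_UN
    by (intro closedin_INT determined_by_imp_closedin_cantor[OF finite_dyadic_block
        determined_by_Compl[OF determined_by_syndrome_class]]) simp_all
  moreover have "- U \<in> sets cantor_measure"
    using sets.compl_sets[OF U] by (simp add: Compl_eq_Diff_UNIV)
  moreover have "measure cantor_measure (- U) > 1/2"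
    using cantor.prob_compl[OF U] measure_UN_syndrome_class_0_le[of 3]
    by (simp add: U_def Compl_eq_Diff_UNIV)
  moreover have "infinite {n. flip n x \<notin> - U}" for x
    unfolding U_def using infinite_flips_into_UN_syndrome_class_0 by simp
  ultimately show ?thesis
    by blast
qed

end
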